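(* Let $\beta>0$, $\rho>0$, let $f,c_i$ ($i\in\mathcal I=\{1,\dots,m\}$) be differentiable, let $(x_k,u_k)\in\mathbb{R}^n\times\mathbb{R}^m$, and let $H_k$ be a symmetric $n\times n$ matrix. Write $c_{ki}=c_i(x_k)$, $\nabla c_{ki}=\nabla c_i(x_k)$, $\nabla f_k=\nabla f(x_k)$, $y_{ki}=y_i(x_k,u_k;\beta,\rho)$, $\lambda_{ki}=\lambda_i(x_k,u_k;\beta,\rho)$, $\nu_{ki}=\lambda_{ki}/(y_{ki}+\lambda_{ki})$, $w_{ki}=\rho\beta/(y_{ki}+\lambda_{ki})^2$, and $B_k=H_k+\sum_{i}\nu_{ki}\nabla c_{ki}\nabla c_{ki}^T$. For $d=(d_x,d_u)\in\mathbb{R}^n\times\mathbb{R}^m$ consider the QP $$\min\ q_k(d)=\Big(\rho\nabla f_k+\sum_i\lambda_{ki}\nabla c_{ki}\Big)^Td_x+\tfrac12 d^TQ_kd\quad\text{s.t.}\quad \nu_{ki}\nabla c_{ki}^Td_x-\rho\frac{y_{ki}}{y_{ki}+\lambda_{ki}}d_{ui}=-(c_{ki}+y_{ki}),\ i\in\mathcal I,$$ where $Q_k=\begin{pmatrix}H_k+\sum_i w_{ki}\nabla c_{ki}\nabla c_{ki}^T & G_k\\ G_k^T & \mathrm{diag}(\rho^2w_{k1},\dots,\rho^2w_{km})\end{pmatrix}$ with $G_k$ the $n\times m$ matrix whose $i$th column is $\rho w_{ki}\nabla c_{ki}$. Then: (1) Any KKT point (in particular any solution) $d=(d_x,d_u)$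 of this QP satisfies the Newton system $$B_kd_x+\sum_i\rho\nu_{ki}d_{ui}\nabla c_{ki}=-\Big(\rho\nabla f_k+\sum_i\lambda_{ki}\nabla c_{ki}\Big),\qquad \rho\nu_{ki}\nabla c_{ki}^Td_x-\rho^2\frac{y_{ki}}{y_{ki}+\lambda_{ki}}d_{ui}=-\rho(c_{ki}+y_{ki}),\ i\in\mathcal I.$$ (2) If $d_x^TH_kd_x+\sum_i\nu_{ki}(\nabla c_{ki}^Td_x)^2>0$ for all nonzero $d_x\in\mathbb{R}^n$, then the QP has a unique solution, and hence the Newton system in (1) is consistent.
   Context: For $\beta,\rho>0$: $y_i(x,u;\beta,\rho)=\tfrac12[\sqrt{(c_i(x)+\rho u_i)^2+4\rho\beta}-(c_i(x)+\rho u_i)]$, $\lambda_i(x,u;\beta,\rho)=\tfrac12[\sqrt{(c_i(x)+\rho u_i)^2+4\rho\beta}+(c_i(x)+\rho u_i)]$; both are positive and $\lambda_iy_i=\rho\beta$. *)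

theory Defs
  imports "HOL-Analysis.Analysis"
begin

text \<open>Data: beta, rho > 0; constraint functions c i (i ranges over the finite
index type 'm, playing the role of {1..m}) with gradients gc i; gradient gf of f;
symmetric matrix H; current iterate (x, u).\<close>

definition yk :: "real \<Rightarrow> real \<Rightarrow> ('m \<Rightarrow> real^'n \<Rightarrow> real) \<Rightarrow> real^'n \<Rightarrow> real^'m \<Rightarrow> 'm \<Rightarrow> real" where
  "yk \<beta> \<rho> c x u i = (sqrt ((c i x + \<rho> * u$i)^2 + 4*\<rho>*\<beta>) - (c i x + \<rho> * u$i)) / 2"

definition lamk :: "real \<Rightarrow> real \<Rightarrow> ('m \<Rightarrow> real^'n \<Rightarrow> real) \<Rightarrow> real^'n \<Rightarrow> real^'m \<Rightarrow> 'm \<Rightarrow> real" where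
  "lamk \<beta> \<rho> c x u i = (sqrt ((c i x + \<rho> * u$i)^2 + 4*\<rho>*\<beta>) + (c i x + \<rho> * u$i)) / 2"

definition nuk :: "real \<Rightarrow> real \<Rightarrow> ('m \<Rightarrow> real^'n \<Rightarrow> real) \<Rightarrow> real^'n \<Rightarrow> real^'m \<Rightarrow> 'm \<Rightarrow> real" where
  "nuk \<beta> \<rho> c x u i = lamk \<beta> \<rho> c x u i / (yk \<beta> \<rho> c x u i + lamk \<beta> \<rho> c x u i)"

definition wk :: "real \<Rightarrow> real \<Rightarrow> ('m \<Rightarrow> real^'n \<Rightarrow> real) \<Rightarrow> real^'n \<Rightarrow> real^'m \<Rightarrow> 'm \<Rightarrow> real" where
  "wk \<beta> \<rho> c x u i = \<rho> * \<beta> / (yk \<beta> \<rho> c x u i + lamk \<beta> \<rho> c x u i)^2"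

definition outer :: "real^'n \<Rightarrow> real^'n^'n" where
  "outer v = (\<chi> a b. v$a * v$b)"

definition Bk :: "real \<Rightarrow> real \<Rightarrow> ('m::finite \<Rightarrow> real^'n \<Rightarrow> real) \<Rightarrow> ('m \<Rightarrow> real^'n \<Rightarrow> real^'n)
    \<Rightarrow> real^'n^'n \<Rightarrow> real^'n \<Rightarrow> real^'m \<Rightarrow> real^'n^'n" where
  "Bk \<beta> \<rho> c gc H x u = H + (\<Sum>i\<in>UNIV. nuk \<beta> \<rho> c x u i *\<^sub>R outer (gc i x))"

definition gk :: "real \<Rightarrow> real \<Rightarrow> (real^'n \<Rightarrow> real^'n) \<Rightarrow> ('m::finite \<Rightarrow> real^'n \<Rightarrow> real)
    \<Rightarrow> ('m \<Rightarrow> real^'n \<Rightarrow> real^'n) \<Rightarrow> real^'n \<Rightarrow> real^'m \<Rightarrow> real^'n" where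
  "gk \<beta> \<rho> gf c gc x u = \<rho> *\<^sub>R gf x + (\<Sum>i\<in>UNIV. lamk \<beta> \<rho> c x u i *\<^sub>R gc i x)"

definition Q11 :: "real \<Rightarrow> real \<Rightarrow> ('m::finite \<Rightarrow> real^'n \<Rightarrow> real) \<Rightarrow> ('m \<Rightarrow> real^'n \<Rightarrow> real^'n)
    \<Rightarrow> real^'n^'n \<Rightarrow> real^'n \<Rightarrow> real^'m \<Rightarrow> real^'n^'n" where
  "Q11 \<beta> \<rho> c gc H x u = H + (\<Sum>i\<in>UNIV. wk \<beta> \<rho> c x u i *\<^sub>R outer (gc i x))"

definition Gk :: "real \<Rightarrow> real \<Rightarrow> ('m \<Rightarrow> real^'n \<Rightarrow> real) \<Rightarrow> ('m \<Rightarrow> real^'n \<Rightarrow> real^'n)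
    \<Rightarrow> real^'n \<Rightarrow> real^'m \<Rightarrow> real^'m^'n" where
  "Gk \<beta> \<rho> c gc x u = (\<chi> a i. \<rho> * wk \<beta> \<rho> c x u i * (gc i x)$a)"

definition Dk :: "real \<Rightarrow> real \<Rightarrow> ('m \<Rightarrow> real^'n \<Rightarrow> real) \<Rightarrow> real^'n \<Rightarrow> real^'m \<Rightarrow> real^'m^'m" where
  "Dk \<beta> \<rho> c x u = (\<chi> i j. if i = j then \<rho>^2 * wk \<beta> \<rho> c x u i else 0)"

definition Qmul :: "real \<Rightarrow> real \<Rightarrow> ('m::finite \<Rightarrow> real^'n \<Rightarrow> real) \<Rightarrow> ('m \<Rightarrow> real^'n \<Rightarrow> real^'n)
    \<Rightarrow> real^'n^'n \<Rightarrow> real^'n \<Rightarrow> real^'m \<Rightarrow> (real^'n) \<times> (real^'m) \<Rightarrow> (real^'n) \<times> (real^'m)" where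
  "Qmul \<beta> \<rho> c gc H x u d =
     (Q11 \<beta> \<rho> c gc H x u *v fst d + Gk \<beta> \<rho> c gc x u *v snd d,
      transpose (Gk \<beta> \<rho> c gc x u) *v fst d + Dk \<beta> \<rho> c x u *v snd d)"

definition qobj :: "real \<Rightarrow> real \<Rightarrow> (real^'n \<Rightarrow> real^'n) \<Rightarrow> ('m::finite \<Rightarrow> real^'n \<Rightarrow> real)
    \<Rightarrow> ('m \<Rightarrow> real^'n \<Rightarrow> real^'n) \<Rightarrow> real^'n^'n \<Rightarrow> real^'n \<Rightarrow> real^'m \<Rightarrow> (real^'n) \<times> (real^'m) \<Rightarrow> real" where
  "qobj \<beta> \<rho> gf c gc H x u d =
     gk \<beta> \<rho> gf c gc x u \<bullet> fst d + (1/2) * (d \<bullet> Qmul \<beta> \<rho> c gc H x u d)"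

definition qp_feasible :: "real \<Rightarrow> real \<Rightarrow> ('m \<Rightarrow> real^'n \<Rightarrow> real)
    \<Rightarrow> ('m \<Rightarrow> real^'n \<Rightarrow> real^'n) \<Rightarrow> real^'n \<Rightarrow> real^'m \<Rightarrow> (real^'n) \<times> (real^'m) \<Rightarrow> bool" where
  "qp_feasible \<beta> \<rho> c gc x u d \<longleftrightarrow>
     (\<forall>i. nuk \<beta> \<rho> c x u i * (gc i x \<bullet> fst d)
          - \<rho> * (yk \<beta> \<rho> c x u i / (yk \<beta> \<rho> c x u i + lamk \<beta> \<rho> c x u i)) * (snd d)$i
          = - (c i x + yk \<beta> \<rho> c x u i))"

text \<open>KKT point of the QP: feasibility plus stationarity of the Lagrangian
  (gradient of q_k is (g,0) + Q_k d since Q_k is symmetric; the gradient of the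
  i-th constraint is (nu_ki grad c_ki, - rho y_ki/(y_ki+lambda_ki) e_i)).\<close>
definition qp_kkt :: "real \<Rightarrow> real \<Rightarrow> (real^'n \<Rightarrow> real^'n) \<Rightarrow> ('m::finite \<Rightarrow> real^'n \<Rightarrow> real)
    \<Rightarrow> ('m \<Rightarrow> real^'n \<Rightarrow> real^'n) \<Rightarrow> real^'n^'n \<Rightarrow> real^'n \<Rightarrow> real^'m \<Rightarrow> (real^'n) \<times> (real^'m) \<Rightarrow> bool" where
  "qp_kkt \<beta> \<rho> gf c gc H x u d \<longleftrightarrow>
     qp_feasible \<beta> \<rho> c gc x u d \<and>
     (\<exists>\<mu>::real^'m. (gk \<beta> \<rho> gf c gc x u, 0) + Qmul \<beta> \<rho> c gc H x u d
        + (\<Sum>i\<in>UNIV. \<mu>$i *\<^sub>R (nuk \<beta> \<rho> c x u i *\<^sub>R gc i x,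
              (- (\<rho> * (yk \<beta> \<rho> c x u i / (yk \<beta> \<rho> c x u i + lamk \<beta> \<rho> c x u i)))) *\<^sub>R axis i 1))
        = 0)"

definition qp_solution :: "real \<Rightarrow> real \<Rightarrow> (real^'n \<Rightarrow> real^'n) \<Rightarrow> ('m::finite \<Rightarrow> real^'n \<Rightarrow> real)
    \<Rightarrow> ('m \<Rightarrow> real^'n \<Rightarrow> real^'n) \<Rightarrow> real^'n^'n \<Rightarrow> real^'n \<Rightarrow> real^'m \<Rightarrow> (real^'n) \<times> (real^'m) \<Rightarrow> bool" where
  "qp_solution \<beta> \<rho> gf c gc H x u d \<longleftrightarrow>
     qp_feasible \<beta> \<rho> c gc x u d \<and>
     (\<forall>d'. qp_feasible \<beta> \<rho> c gc x u d' \<longrightarrow> qobj \<beta> \<rho> gf c gc H x u d \<le> qobj \<beta> \<rho> gf c gc H x u d')"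

definition newton_sys :: "real \<Rightarrow> real \<Rightarrow> (real^'n \<Rightarrow> real^'n) \<Rightarrow> ('m::finite \<Rightarrow> real^'n \<Rightarrow> real)
    \<Rightarrow> ('m \<Rightarrow> real^'n \<Rightarrow> real^'n) \<Rightarrow> real^'n^'n \<Rightarrow> real^'n \<Rightarrow> real^'m \<Rightarrow> (real^'n) \<times> (real^'m) \<Rightarrow> bool" where
  "newton_sys \<beta> \<rho> gf c gc H x u d \<longleftrightarrow>
     Bk \<beta> \<rho> c gc H x u *v fst d
       + (\<Sum>i\<in>UNIV. (\<rho> * nuk \<beta> \<rho> c x u i * (snd d)$i) *\<^sub>R gc i x)
       = - gk \<beta> \<rho> gf c gc x u
   \<and> (\<forall>i. \<rho> * nuk \<beta> \<rho> c x u i * (gc i x \<bullet> fst d)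
          - \<rho>^2 * (yk \<beta> \<rho> c x u i / (yk \<beta> \<rho> c x u i + lamk \<beta> \<rho> c x u i)) * (snd d)$i
          = - \<rho> * (c i x + yk \<beta> \<rho> c x u i))"

end

theory Submission
  imports Defs
begin

text \<open>The constraints of the QP can be solved for \<open>d\<^sub>u\<close>, so the feasible set is an affine copy
  of \<open>\<real>\<^sup>n\<close> parametrised by \<open>d\<^sub>x\<close>. A feasible point is a KKT point or a minimiser exactly when the
  gradient of \<open>q\<^sub>k\<close> is orthogonal to this affine set, i.e. when the reduced gradient vanishes.
  Since \<open>\<nu>\<^sub>i + y\<^sub>i/(y\<^sub>i+\<lambda>\<^sub>i) = 1\<close> and \<open>w\<^sub>i = \<nu>\<^sub>i y\<^sub>i/(y\<^sub>i+\<lambda>\<^sub>i)\<close>, the vanishing of the reduced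
  gradient is the first Newton equation, and the constraint scaled by \<open>\<rho>\<close> is the second.
  On the feasible directions the quadratic form of \<open>Q\<^sub>k\<close> is
  \<open>d\<^sub>x\<^sup>T H d\<^sub>x + \<Sum>\<^sub>i \<nu>\<^sub>i (\<nabla>c\<^sub>i\<^sup>T d\<^sub>x)\<^sup>2 (y\<^sub>i+\<lambda>\<^sub>i)/y\<^sub>i\<close>, which dominates the form in (2); so the reduced
  Hessian is positive definite, the reduced gradient has exactly one zero on the feasible set, and
  that zero is the unique solution.\<close>

lemma linear_coeff_eq_0_if_quadratic_nonneg:
  fixes a b :: real
  assumes "\<And>s. 0 \<le> s * a + s\<^sup>2 * b"
  shows "a = 0"
proof (rule ccontr)
  assume "a \<noteq> 0"
  define m where "m = \<bar>b\<bar> + 1"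
  have "m > 0" "b \<le> m - 1" by (auto simp: m_def)
  have "(a / m)\<^sup>2 * b \<le> (a / m)\<^sup>2 * (m - 1)"
    using \<open>b \<le> m - 1\<close> by (intro mult_left_mono) auto
  also have "\<dots> = a\<^sup>2 / m - a\<^sup>2 / m\<^sup>2"
    using \<open>m > 0\<close> by (simp add: field_simps power2_eq_square)
  finally have "(- a / m) * a + (- a / m)\<^sup>2 * b \<le> - (a\<^sup>2 / m\<^sup>2)"
    by (simp add: power2_eq_square)
  moreover have "a\<^sup>2 / m\<^sup>2 > 0" using \<open>a \<noteq> 0\<close> \<open>m > 0\<close> by simp
  ultimately show False using assms[of "- a / m"] by linarith
qed

lemma adjoint_eq_0_iff:
  fixes f :: "'n::euclidean_space \<Rightarrow> 'm::euclidean_space"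
  assumes "linear f"
  shows "adjoint f y = 0 \<longleftrightarrow> (\<forall>x. f x \<bullet> y = 0)"
  by (metis adjoint_works[OF assms] inner_eq_zero_iff inner_zero_right)

lemma outer_mult_vector: "outer a *v v = (a \<bullet> v) *\<^sub>R a"
  by (simp add: vec_eq_iff outer_def matrix_vector_mult_def inner_vec_def sum_distrib_left
      mult.commute mult.left_commute)

lemma sum_scaleR_matrix_vector:
  fixes M :: "'i \<Rightarrow> real^'n^'k"
  shows "(\<Sum>i\<in>S. f i *\<^sub>R M i) *v v = (\<Sum>i\<in>S. f i *\<^sub>R (M i *v v))"
  by (induction S rule: infinite_finite_induct)
    (simp_all add: matrix_vector_mult_add_rdistrib scaleR_matrix_vector_assoc)

lemma Gk_mult_vector: "Gk \<beta> \<rho> c gc x u *v v = (\<Sum>i\<in>UNIV. (\<rho> * wk \<beta> \<rho> c x u i * v $ i) *\<^sub>R gc i x)"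
  by (simp add: vec_eq_iff Gk_def matrix_vector_mult_def sum_component mult.commute mult.left_commute)

definition quad_obj :: "'a::real_inner \<Rightarrow> ('a \<Rightarrow> 'a) \<Rightarrow> 'a \<Rightarrow> real" where
  "quad_obj g Q d = g \<bullet> d + 1/2 * (d \<bullet> Q d)"

lemma quad_obj_add:
  assumes "linear Q" and "\<And>x y. x \<bullet> Q y = Q x \<bullet> y"
  shows "quad_obj g Q (d + e) = quad_obj g Q d + (g + Q d) \<bullet> e + 1/2 * (e \<bullet> Q e)"
proof -
  have "(d + e) \<bullet> Q (d + e) = d \<bullet> Q d + 2 * (Q d \<bullet> e) + e \<bullet> Q e"
    using assms by (simp add: linear_add inner_add_left inner_add_right inner_commute)
  then show ?thesis by (simp add: quad_obj_def inner_add_left inner_add_right algebra_simps)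
qed

context
  fixes Q :: "'a::euclidean_space \<Rightarrow> 'a" and E :: "'k::euclidean_space \<Rightarrow> 'a"
  assumes linear_Q: "linear Q" and Q_symmetric: "\<And>x y. x \<bullet> Q y = Q x \<bullet> y"
    and linear_E: "linear E"
begin

lemma quad_obj_add_at_stationary:
  assumes "adjoint E (g + Q d) = 0"
  shows "quad_obj g Q (d + E k) = quad_obj g Q d + 1/2 * (E k \<bullet> Q (E k))"
  using assms quad_obj_add[OF linear_Q Q_symmetric] adjoint_eq_0_iff[OF linear_E]
  by (simp add: inner_commute)

lemma adjoint_gradient_eq_0_if_min:
  assumes "\<And>k. quad_obj g Q d \<le> quad_obj g Q (d + E k)"
  shows "adjoint E (g + Q d) = 0"
proof -
  define r where "r = adjoint E (g + Q d)"
  have "0 \<le> s * (r \<bullet> r) + s\<^sup>2 * (1/2 * (E r \<bullet> Q (E r)))" for s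
  proof -
    have "(g + Q d) \<bullet> E (s *\<^sub>R r) = s * (r \<bullet> r)"
      by (simp add: r_def linear_scale[OF linear_E] adjoint_works[OF linear_E] inner_commute)
    moreover have "E (s *\<^sub>R r) \<bullet> Q (E (s *\<^sub>R r)) = s\<^sup>2 * (E r \<bullet> Q (E r))"
      by (simp add: linear_scale[OF linear_E] linear_scale[OF linear_Q] power2_eq_square)
    ultimately show ?thesis
      using assms[of "s *\<^sub>R r"] quad_obj_add[OF linear_Q Q_symmetric, of g d] by simp
  qed
  then have "r \<bullet> r = 0" by (rule linear_coeff_eq_0_if_quadratic_nonneg)
  then show ?thesis by (simp add: r_def)
qed

lemma adjoint_gradient_eq_0_solvable:
  assumes "\<And>k. k \<noteq> 0 \<Longrightarrow> 0 < E k \<bullet> Q (E k)"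
  shows "\<exists>k. adjoint E (g + Q (p + E k)) = 0"
proof -
  define F where "F = adjoint E \<circ> Q \<circ> E"
  have "linear F"
    unfolding F_def by (intro linear_compose linear_E linear_Q adjoint_linear)
  moreover have "inj F"
    unfolding linear_injective_0[OF \<open>linear F\<close>]
  proof (intro allI impI)
    fix k assume "F k = 0"
    then have "E k \<bullet> Q (E k) = 0"
      by (simp add: F_def adjoint_works[OF linear_E, symmetric])
    then show "k = 0" using assms by force
  qed
  ultimately obtain k where "F k = - adjoint E (g + Q p)"
    by (metis linear_inj_imp_surj surjD)
  then have "adjoint E (g + Q (p + E k)) = 0"
    by (simp add: F_def linear_add[OF linear_Q] linear_add[OF adjoint_linear[OF linear_E]])
  then show ?thesis ..
qed

end

context
  fixes \<beta> \<rho> :: real and gf :: "real^'n \<Rightarrow> real^'n" and c :: "'m::finite \<Rightarrow> real^'n \<Rightarrow> real"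
    and gc :: "'m \<Rightarrow> real^'n \<Rightarrow> real^'n" and H :: "real^'n^'n" and x :: "real^'n" and u :: "real^'m"
  assumes \<beta>_pos: "\<beta> > 0" and \<rho>_pos: "\<rho> > 0" and H_symmetric: "transpose H = H"
begin

private abbreviation "Y \<equiv> yk \<beta> \<rho> c x u"
private abbreviation "Lam \<equiv> lamk \<beta> \<rho> c x u"
private abbreviation "Nu \<equiv> nuk \<beta> \<rho> c x u"
private abbreviation "W \<equiv> wk \<beta> \<rho> c x u"
private abbreviation "A i \<equiv> gc i x"
private abbreviation "G \<equiv> gk \<beta> \<rho> gf c gc x u"
private abbreviation "QM \<equiv> Qmul \<beta> \<rho> c gc H x u"
private abbreviation "feasible \<equiv> qp_feasible \<beta> \<rho> c gc x u"

definition theta :: "'m \<Rightarrow> real" where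
  "theta i = Y i / (Y i + Lam i)"

lemma Y_Lam_pos: "Y i > 0" "Lam i > 0" "Y i * Lam i = \<rho> * \<beta>"
proof -
  define z where "z = c i x + \<rho> * u $ i"
  define S where "S = sqrt (z\<^sup>2 + 4 * \<rho> * \<beta>)"
  have "0 < 4 * \<rho> * \<beta>" using \<beta>_pos \<rho>_pos by simp
  then have S2: "S\<^sup>2 = z\<^sup>2 + 4 * \<rho> * \<beta>" and "\<bar>z\<bar> < S"
    by (auto simp: S_def real_less_rsqrt)
  have Y_eq: "Y i = (S - z) / 2" and Lam_eq: "Lam i = (S + z) / 2"
    by (simp_all add: yk_def lamk_def z_def S_def)
  with \<open>\<bar>z\<bar> < S\<close> show "Y i > 0" "Lam i > 0" by auto
  have "Y i * Lam i = (S - z) * (S + z) / 4" unfolding Y_eq Lam_eq by simp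
  also have "\<dots> = (S\<^sup>2 - z\<^sup>2) / 4" by (simp add: power2_eq_square algebra_simps)
  finally show "Y i * Lam i = \<rho> * \<beta>" using S2 by simp
qed

lemma theta_pos: "theta i > 0"
  using Y_Lam_pos[of i] by (simp add: theta_def)

lemma Nu_pos: "Nu i > 0"
  using Y_Lam_pos[of i] by (simp add: nuk_def)

lemma Nu_add_theta: "Nu i + theta i = 1"
  using Y_Lam_pos[of i] by (simp add: nuk_def theta_def add_divide_distrib[symmetric] add.commute)

lemma W_eq: "W i = Nu i * theta i"
proof -
  have "W i = (Y i * Lam i) / ((Y i + Lam i) * (Y i + Lam i))"
    unfolding wk_def Y_Lam_pos(3) power2_eq_square ..
  then show ?thesis by (simp add: nuk_def theta_def mult.commute)
qed

text \<open>\<open>Q\<^sub>k\<close> is the Hessian of \<open>1/2 d\<^sub>x\<^sup>T H d\<^sub>x + 1/2 \<Sum>\<^sub>i w\<^sub>i (\<nabla>c\<^sub>i\<^sup>T d\<^sub>x + \<rho> d\<^sub>u\<^sub>i)\<^sup>2\<close>,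
  where \<open>zeta i\<close> is the linearisation of \<open>c\<^sub>i + \<rho> u\<^sub>i\<close>.\<close>

definition zeta :: "'m \<Rightarrow> (real^'n) \<times> (real^'m) \<Rightarrow> real" where
  "zeta i d = A i \<bullet> fst d + \<rho> * snd d $ i"

lemma fst_QM: "fst (QM d) = H *v fst d + (\<Sum>i\<in>UNIV. (W i * zeta i d) *\<^sub>R A i)"
  by (simp add: Qmul_def Q11_def matrix_vector_mult_add_rdistrib sum_scaleR_matrix_vector
      outer_mult_vector Gk_mult_vector zeta_def algebra_simps scaleR_add_left sum.distrib)

lemma snd_QM: "snd (QM d) $ i = \<rho> * W i * zeta i d"
proof -
  have "snd (QM d) $ i = \<rho> * W i * (A i \<bullet> fst d) + \<rho>\<^sup>2 * W i * snd d $ i"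
    by (simp add: Qmul_def Dk_def Gk_def matrix_vector_mult_def transpose_def inner_vec_def
        sum_distrib_left algebra_simps if_distrib if_distribR)
  then show ?thesis by (simp add: zeta_def algebra_simps power2_eq_square)
qed

lemma inner_QM: "e \<bullet> QM d = fst e \<bullet> (H *v fst d) + (\<Sum>i\<in>UNIV. W i * zeta i e * zeta i d)"
proof -
  have "e \<bullet> QM d = fst e \<bullet> fst (QM d) + (\<Sum>i\<in>UNIV. snd e $ i * snd (QM d) $ i)"
    by (simp add: inner_prod_def inner_vec_def)
  then show ?thesis
    by (simp add: fst_QM snd_QM inner_add_right inner_sum_right sum.distrib[symmetric]
        zeta_def inner_commute[of "fst e"] algebra_simps)
qed

lemma QM_symmetric: "e \<bullet> QM d = QM e \<bullet> d"
proof -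
  have "fst e \<bullet> (H *v fst d) = fst d \<bullet> (H *v fst e)"
    by (metis H_symmetric dot_lmul_matrix inner_commute transpose_matrix_vector)
  then show ?thesis
    by (simp add: inner_QM inner_commute[of "QM e"] mult.commute mult.left_commute)
qed

lemma linear_QM: "linear QM"
  by (rule linearI) (simp_all add: Qmul_def algebra_simps)

text \<open>The feasible set is \<open>base_point + range null_dir\<close>: \<open>null_dir\<close> parametrises the null space
  of the constraints by its \<open>d\<^sub>x\<close>-component, and the adjoint of \<open>null_dir\<close> applied to the
  gradient of \<open>q\<^sub>k\<close> is the reduced gradient.\<close>

definition null_dir :: "real^'n \<Rightarrow> (real^'n) \<times> (real^'m)" where
  "null_dir k = (k, \<chi> i. Nu i * (A i \<bullet> k) / (\<rho> * theta i))"

lemma linear_null_dir: "linear null_dir"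
  by (rule linearI) (simp_all add: null_dir_def vec_eq_iff inner_add_right add_divide_distrib algebra_simps)

lemma zeta_null_dir: "zeta i (null_dir k) = (A i \<bullet> k) / theta i"
proof -
  have "(A i \<bullet> k) / theta i = (A i \<bullet> k) * (theta i + Nu i) / theta i"
    using Nu_add_theta[of i] by simp
  then show ?thesis
    using theta_pos[of i] \<rho>_pos by (simp add: zeta_def null_dir_def field_simps)
qed

lemma null_dir_quadratic:
  "null_dir k \<bullet> QM (null_dir k) = k \<bullet> (H *v k) + (\<Sum>i\<in>UNIV. Nu i * (A i \<bullet> k)\<^sup>2 / theta i)"
proof -
  have "W i * zeta i (null_dir k) * zeta i (null_dir k) = Nu i * (A i \<bullet> k)\<^sup>2 / theta i" for i
    using theta_pos[of i] by (simp add: zeta_null_dir W_eq power2_eq_square)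
  then show ?thesis by (simp add: inner_QM null_dir_def)
qed

lemma adjoint_null_dir:
  "adjoint null_dir v = fst v + (\<Sum>i\<in>UNIV. (Nu i / (\<rho> * theta i) * snd v $ i) *\<^sub>R A i)"
proof -
  have "adjoint null_dir = (\<lambda>v. fst v + (\<Sum>i\<in>UNIV. (Nu i / (\<rho> * theta i) * snd v $ i) *\<^sub>R A i))"
    by (rule adjoint_unique)
      (simp add: null_dir_def inner_prod_def inner_vec_def[of "vec_lambda _"] inner_add_right
        inner_sum_right inner_commute[of _ "A _"] algebra_simps)
  then show ?thesis by simp
qed

lemma adjoint_null_dir_gradient:
  "adjoint null_dir ((G, 0) + QM d)
     = G + Bk \<beta> \<rho> c gc H x u *v fst d + (\<Sum>i\<in>UNIV. (\<rho> * Nu i * snd d $ i) *\<^sub>R A i)"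
proof -
  have coeff: "W i * zeta i d + Nu i / (\<rho> * theta i) * snd (QM d) $ i = Nu i * zeta i d" for i
  proof -
    have "W i * zeta i d + Nu i / (\<rho> * theta i) * snd (QM d) $ i
        = Nu i * zeta i d * (Nu i + theta i)"
      using theta_pos[of i] \<rho>_pos by (simp add: snd_QM W_eq field_simps)
    then show ?thesis by (simp add: Nu_add_theta)
  qed
  have "adjoint null_dir ((G, 0) + QM d)
      = G + H *v fst d + (\<Sum>i\<in>UNIV. (W i * zeta i d + Nu i / (\<rho> * theta i) * snd (QM d) $ i) *\<^sub>R A i)"
    by (simp add: adjoint_null_dir fst_QM scaleR_add_left sum.distrib algebra_simps)
  also have "\<dots> = G + H *v fst d + (\<Sum>i\<in>UNIV. (Nu i * zeta i d) *\<^sub>R A i)"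
    by (simp only: coeff)
  also have "\<dots> = G + Bk \<beta> \<rho> c gc H x u *v fst d + (\<Sum>i\<in>UNIV. (\<rho> * Nu i * snd d $ i) *\<^sub>R A i)"
    by (simp add: Bk_def matrix_vector_mult_add_rdistrib sum_scaleR_matrix_vector outer_mult_vector
        zeta_def algebra_simps scaleR_add_left sum.distrib)
  finally show ?thesis .
qed

definition base_point :: "(real^'n) \<times> (real^'m)" where
  "base_point = (0, \<chi> i. (c i x + Y i) / (\<rho> * theta i))"

lemma feasible_iff: "feasible d \<longleftrightarrow> d = base_point + null_dir (fst d)"
proof -
  have "Nu i * (A i \<bullet> fst d) - \<rho> * theta i * snd d $ i = - (c i x + Y i)
      \<longleftrightarrow> snd d $ i = (c i x + Y i + Nu i * (A i \<bullet> fst d)) / (\<rho> * theta i)" for i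
    using theta_pos[of i] \<rho>_pos by (auto simp: eq_divide_eq algebra_simps)
  then show ?thesis
    by (simp add: qp_feasible_def theta_def[symmetric] base_point_def null_dir_def prod_eq_iff
        vec_eq_iff add_divide_distrib)
qed

lemma fst_null_dir [simp]: "fst (null_dir k) = k"
  by (simp add: null_dir_def)

lemma feasible_add_null_dir: "feasible d \<Longrightarrow> feasible (d + null_dir k)"
proof -
  assume "feasible d"
  then have "d + null_dir k = base_point + (null_dir (fst d) + null_dir k)"
    using feasible_iff by (metis add.assoc)
  also have "\<dots> = base_point + null_dir (fst (d + null_dir k))"
    by (simp add: linear_add[OF linear_null_dir])
  finally show ?thesis using feasible_iff by blast
qed

lemma feasible_eq_add_null_dir: "feasible d \<Longrightarrow> feasible d' \<Longrightarrow> d' = d + null_dir (fst d' - fst d)"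
proof -
  assume "feasible d" "feasible d'"
  then have "d' - d = null_dir (fst d') - null_dir (fst d)"
    using feasible_iff by (metis add_diff_cancel_left)
  then show ?thesis by (simp add: linear_diff[OF linear_null_dir] algebra_simps)
qed

lemma qobj_eq_quad_obj: "qobj \<beta> \<rho> gf c gc H x u = quad_obj (G, 0) QM"
  by (simp add: fun_eq_iff qobj_def quad_obj_def inner_prod_def)

lemma qp_solution_iff:
  "qp_solution \<beta> \<rho> gf c gc H x u d
     \<longleftrightarrow> feasible d \<and> (\<forall>k. quad_obj (G, 0) QM d \<le> quad_obj (G, 0) QM (d + null_dir k))"
  unfolding qp_solution_def qobj_eq_quad_obj
  by (metis feasible_add_null_dir feasible_eq_add_null_dir)

lemma newton_sys_if_adjoint_gradient_eq_0:
  assumes "feasible d" and "adjoint null_dir ((G, 0) + QM d) = 0"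
  shows "newton_sys \<beta> \<rho> gf c gc H x u d"
proof -
  have "Bk \<beta> \<rho> c gc H x u *v fst d + (\<Sum>i\<in>UNIV. (\<rho> * Nu i * snd d $ i) *\<^sub>R A i) = - G"
    using assms(2) by (simp add: adjoint_null_dir_gradient add.assoc add_eq_0_iff)
  moreover have "\<rho> * Nu i * (A i \<bullet> fst d) - \<rho>\<^sup>2 * theta i * snd d $ i = - \<rho> * (c i x + Y i)" for i
  proof -
    have "Nu i * (A i \<bullet> fst d) - \<rho> * theta i * snd d $ i = - (c i x + Y i)"
      using assms(1) by (simp add: qp_feasible_def theta_def)
    then have "\<rho> * (Nu i * (A i \<bullet> fst d) - \<rho> * theta i * snd d $ i) = \<rho> * - (c i x + Y i)"
      by simp
    then show ?thesis by (simp add: algebra_simps power2_eq_square)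
  qed
  ultimately show ?thesis by (simp add: newton_sys_def theta_def)
qed

lemma adjoint_gradient_eq_0_if_qp_kkt:
  assumes "qp_kkt \<beta> \<rho> gf c gc H x u d"
  shows "adjoint null_dir ((G, 0) + QM d) = 0"
proof -
  define N where "N i = (Nu i *\<^sub>R A i, (- (\<rho> * theta i)) *\<^sub>R axis i (1::real))" for i
  obtain \<mu> :: "real^'m" where stationary: "(G, 0) + QM d + (\<Sum>i\<in>UNIV. \<mu> $ i *\<^sub>R N i) = 0"
    using assms by (auto simp: qp_kkt_def N_def theta_def)
  have "null_dir k \<bullet> N i = 0" for k i
    using theta_pos[of i] \<rho>_pos by (simp add: null_dir_def N_def inner_axis' inner_commute)
  then have "null_dir k \<bullet> ((G, 0) + QM d) = 0" for k
    using stationary by (simp add: eq_neg_iff_add_eq_0[symmetric] inner_sum_right)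
  then show ?thesis by (simp add: adjoint_eq_0_iff[OF linear_null_dir])
qed

lemma null_dir_quadratic_pos:
  assumes "\<forall>dx::real^'n. dx \<noteq> 0 \<longrightarrow> dx \<bullet> (H *v dx) + (\<Sum>i\<in>UNIV. Nu i * (A i \<bullet> dx)\<^sup>2) > 0"
    and "k \<noteq> 0"
  shows "0 < null_dir k \<bullet> QM (null_dir k)"
proof -
  have "Nu i * (A i \<bullet> k)\<^sup>2 \<le> Nu i * (A i \<bullet> k)\<^sup>2 / theta i" for i
    using theta_pos[of i] Nu_pos[of i] Nu_add_theta[of i]
    by (simp add: le_divide_eq mult_left_le)
  then have "(\<Sum>i\<in>UNIV. Nu i * (A i \<bullet> k)\<^sup>2) \<le> (\<Sum>i\<in>UNIV. Nu i * (A i \<bullet> k)\<^sup>2 / theta i)"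
    by (rule sum_mono)
  moreover have "0 < k \<bullet> (H *v k) + (\<Sum>i\<in>UNIV. Nu i * (A i \<bullet> k)\<^sup>2)"
    using assms by blast
  ultimately show ?thesis by (simp add: null_dir_quadratic)
qed

lemma newton_sys_if_qp_kkt: "qp_kkt \<beta> \<rho> gf c gc H x u d \<Longrightarrow> newton_sys \<beta> \<rho> gf c gc H x u d"
  using newton_sys_if_adjoint_gradient_eq_0 adjoint_gradient_eq_0_if_qp_kkt qp_kkt_def by blast

lemma adjoint_gradient_eq_0_if_qp_solution:
  "qp_solution \<beta> \<rho> gf c gc H x u d \<Longrightarrow> adjoint null_dir ((G, 0) + QM d) = 0"
  by (simp add: qp_solution_iff adjoint_gradient_eq_0_if_min[OF linear_QM QM_symmetric linear_null_dir])

lemma newton_sys_if_qp_solution: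
  "qp_solution \<beta> \<rho> gf c gc H x u d \<Longrightarrow> newton_sys \<beta> \<rho> gf c gc H x u d"
  using newton_sys_if_adjoint_gradient_eq_0 adjoint_gradient_eq_0_if_qp_solution qp_solution_def by blast

lemma qp_solution_unique_exists:
  assumes "\<forall>dx::real^'n. dx \<noteq> 0 \<longrightarrow> dx \<bullet> (H *v dx) + (\<Sum>i\<in>UNIV. Nu i * (A i \<bullet> dx)\<^sup>2) > 0"
  shows "\<exists>!d. qp_solution \<beta> \<rho> gf c gc H x u d"
proof -
  note step = quad_obj_add_at_stationary[OF linear_QM QM_symmetric linear_null_dir]
  have pos: "k \<noteq> 0 \<Longrightarrow> 0 < null_dir k \<bullet> QM (null_dir k)" for k
    using null_dir_quadratic_pos[OF assms] .
  obtain k where k: "adjoint null_dir ((G, 0) + QM (base_point + null_dir k)) = 0"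
    using adjoint_gradient_eq_0_solvable[OF linear_QM QM_symmetric linear_null_dir pos] by blast
  define d where "d = base_point + null_dir k"
  have "feasible d" by (simp add: feasible_iff d_def base_point_def)
  have "qp_solution \<beta> \<rho> gf c gc H x u d"
  proof -
    have "0 \<le> null_dir k' \<bullet> QM (null_dir k')" for k'
      using pos[of k'] by (cases "k' = 0") (auto simp: linear_0[OF linear_null_dir])
    then show ?thesis
      unfolding qp_solution_iff using \<open>feasible d\<close> step[OF k[folded d_def]] by simp
  qed
  moreover have "d' = d" if "qp_solution \<beta> \<rho> gf c gc H x u d'" for d'
  proof -
    define k' where "k' = fst d' - fst d"
    have "feasible d'" using that by (simp add: qp_solution_def)
    then have d': "d' = d + null_dir k'"
      using feasible_eq_add_null_dir[OF \<open>feasible d\<close>] by (simp add: k'_def)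
    have "quad_obj (G, 0) QM d' \<le> quad_obj (G, 0) QM d"
      using that \<open>feasible d\<close> unfolding qp_solution_def qobj_eq_quad_obj by blast
    then have "null_dir k' \<bullet> QM (null_dir k') \<le> 0"
      using step[OF k[folded d_def], of k'] d' by simp
    then have "k' = 0" using pos by force
    then show ?thesis using d' by (simp add: linear_0[OF linear_null_dir])
  qed
  ultimately show ?thesis by blast
qed

end

theorem lemma3p1:
  fixes \<beta> \<rho> :: real
    and f :: "real^'n \<Rightarrow> real" and gf :: "real^'n \<Rightarrow> real^'n"
    and c :: "'m::finite \<Rightarrow> real^'n \<Rightarrow> real" and gc :: "'m \<Rightarrow> real^'n \<Rightarrow> real^'n"
    and H :: "real^'n^'n" and x :: "real^'n" and u :: "real^'m"
  assumes "\<beta> > 0" and "\<rho> > 0"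
    and "\<And>z. (f has_derivative (\<lambda>h. gf z \<bullet> h)) (at z)"
    and "\<And>i z. (c i has_derivative (\<lambda>h. gc i z \<bullet> h)) (at z)"
    and "transpose H = H"
  shows "(\<forall>d. qp_kkt \<beta> \<rho> gf c gc H x u d \<longrightarrow> newton_sys \<beta> \<rho> gf c gc H x u d)
       \<and> (\<forall>d. qp_solution \<beta> \<rho> gf c gc H x u d \<longrightarrow> newton_sys \<beta> \<rho> gf c gc H x u d)
       \<and> ((\<forall>dx::real^'n. dx \<noteq> 0 \<longrightarrow>
             dx \<bullet> (H *v dx) + (\<Sum>i\<in>UNIV. nuk \<beta> \<rho> c x u i * (gc i x \<bullet> dx)^2) > 0)
          \<longrightarrow> (\<exists>!d. qp_solution \<beta> \<rho> gf c gc H x u d)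
              \<and> (\<exists>d. newton_sys \<beta> \<rho> gf c gc H x u d))"
proof (intro conjI allI impI)
  fix d
  show "qp_kkt \<beta> \<rho> gf c gc H x u d \<Longrightarrow> newton_sys \<beta> \<rho> gf c gc H x u d"
    by (rule newton_sys_if_qp_kkt[OF assms(1,2,5)])
  show "qp_solution \<beta> \<rho> gf c gc H x u d \<Longrightarrow> newton_sys \<beta> \<rho> gf c gc H x u d"
    by (rule newton_sys_if_qp_solution[OF assms(1,2,5)])
next
  assume "\<forall>dx::real^'n. dx \<noteq> 0 \<longrightarrow>
    dx \<bullet> (H *v dx) + (\<Sum>i\<in>UNIV. nuk \<beta> \<rho> c x u i * (gc i x \<bullet> dx)^2) > 0"
  then show "\<exists>!d. qp_solution \<beta> \<rho> gf c gc H x u d"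
    by (rule qp_solution_unique_exists[OF assms(1,2,5)])
  then show "\<exists>d. newton_sys \<beta> \<rho> gf c gc H x u d"
    using newton_sys_if_qp_solution[OF assms(1,2,5)] by blast
qed

end
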